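(* Let $A\in\mathbb{R}^{n\times n}$ be Metzler and Hurwitz stable, $b_0\in\mathbb{R}^n_{\ge0}$, $g_0:=-e_n^TA^{-1}b_0$, $g_n:=-e_n^TA^{-1}e_n$, and $0<\mu<g_0$. For $\alpha,k_p>0$ consider $$\dot x=Ax-k_px_nze_n+b_0,\qquad \dot z=-\alpha z(\mu-e_n^Tx),$$ and its equilibrium with $z^*=\dfrac{g_0-\mu}{g_n\mu k_p}>0$ and $x^*=-A^{-1}(b_0-k_p\mu z^*e_n)$. Then this equilibrium is locally exponentially stable for all $\alpha,k_p>0$.
   Context: $e_i$ standard basis vectors; $x_n=e_n^Tx$. Metzler: all off-diagonal entries nonnegative. Hurwitz stable: all eigenvalues have negative real part. An equilibrium is called locally exponentially stable here if the Jacobian matrix of the vector field at the equilibrium is Hurwitz stable. *)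

theory Defs
  imports "HOL-Analysis.Analysis"
begin

definition metzler :: "real^'n^'n \<Rightarrow> bool" where
  "metzler A \<longleftrightarrow> (\<forall>i j. i \<noteq> j \<longrightarrow> A $ i $ j \<ge> 0)"

definition eigenvalue :: "real^'n^'n \<Rightarrow> complex \<Rightarrow> bool" where
  "eigenvalue M lam \<longleftrightarrow>
     (\<exists>v :: complex^'n. v \<noteq> 0 \<and> (\<chi> i j. complex_of_real (M $ i $ j)) *v v = lam *s v)"

definition hurwitz :: "real^'n^'n \<Rightarrow> bool" where
  "hurwitz M \<longleftrightarrow> (\<forall>lam. eigenvalue M lam \<longrightarrow> Re lam < 0)"

definition loc_exp_stable :: "(real^'m \<Rightarrow> real^'m) \<Rightarrow> real^'m \<Rightarrow> bool" where
  "loc_exp_stable f p \<longleftrightarrow> (\<exists>J. (f has_derivative (\<lambda>h. J *v h)) (at p) \<and> hurwitz J)"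

text \<open>The closed-loop vector field on the state space indexed by 'n option:
  component Some i is x_i, component None is z. The distinguished index j plays the role of n.\<close>
definition closed_loop ::
  "real^'n^'n \<Rightarrow> real^'n \<Rightarrow> 'n \<Rightarrow> real \<Rightarrow> real \<Rightarrow> real \<Rightarrow> real^('n option) \<Rightarrow> real^('n option)" where
  "closed_loop A b0 j kp alpha mu w =
     (let x = (\<chi> i. w $ Some i); z = w $ None in
      (\<chi> k. case k of
         Some i \<Rightarrow> (A *v x) $ i - kp * x $ j * z * (axis j 1 :: real^'n) $ i + b0 $ i
       | None \<Rightarrow> - alpha * z * (mu - x $ j)))"

end

theory Submission
  imports Defs
begin

text \<open>Since A is Metzler and Hurwitz, the resolvent (t I - A)^-1 is entrywise nonnegative for
  every t \<ge> 0: for large t it is a nonnegative Neumann series, and nonnegativity propagates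
  down to t = 0 through the resolvent identity. Thus -A^-1 is nonnegative with positive diagonal,
  so p = -A^-1 1 and q = -A^-T 1 are positive with A p = A^T q = -1, and with D = diag(q/p) the
  form Re (u^* D A u) is negative definite. At the equilibrium x_n = mu and z > 0, so for an
  eigenvector (u, w) of the Jacobian with Re lambda \<ge> 0 the z-row makes the coupling term in
  u^* D (first block row) have nonnegative real part; this forces u = 0 and then w = 0.\<close>

section \<open>Nonnegativity of the inverse of a Metzler Hurwitz matrix\<close>

definition nonneg_mat :: "real^'m^'n \<Rightarrow> bool" where
  "nonneg_mat X \<longleftrightarrow> (\<forall>i k. 0 \<le> X $ i $ k)"

definition resolvent :: "real^'n^'n \<Rightarrow> real \<Rightarrow> real^'n^'n" where
  "resolvent A t = matrix_inv (mat t - A)"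

lemma ex_minimizer_finite:
  fixes f :: "'a::finite \<Rightarrow> 'b::linorder"
  shows "\<exists>x. \<forall>y. f x \<le> f y"
  using ex_is_arg_min_if_finite[of UNIV f] by (auto simp: is_arg_min_linorder)

lemma matrix_matrix_mult_nth:
  "((X::'a::semiring_1^'m^'n) ** Y) $ i $ k = (\<Sum>l\<in>UNIV. X $ i $ l * Y $ l $ k)"
  by (simp add: matrix_matrix_mult_def)

lemma matrix_add_rdistrib: "((X::'a::semiring_1^'m^'n) + Y) ** Z = X ** Z + Y ** Z"
  by (simp add: vec_eq_iff matrix_matrix_mult_nth distrib_right sum.distrib)

lemma matrix_diff_rdistrib: "((X::'a::ring_1^'m^'n) - Y) ** Z = X ** Z - Y ** Z"
  by (simp add: vec_eq_iff matrix_matrix_mult_nth left_diff_distrib sum_subtractf)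

lemma mat_mult_left: "(mat c :: real^'n^'n) ** X = c *\<^sub>R X"
  by (simp add: vec_eq_iff matrix_matrix_mult_nth mat_def if_distrib if_distribR sum.delta cong: if_cong)

lemma mat_mult_vec: "(mat c :: real^'n^'n) *v x = c *s x"
  by (simp add: vec_eq_iff matrix_vector_mult_def mat_def if_distrib if_distribR sum.delta cong: if_cong)

lemma matrix_mult_minus_left: "(- (X::'a::ring_1^'m^'n)) ** Y = - (X ** Y)"
  by (simp add: vec_eq_iff matrix_matrix_mult_nth sum_negf)

lemma matrix_mult_minus_right: "(X::'a::ring_1^'m^'n) ** (- Y) = - (X ** Y)"
  by (simp add: vec_eq_iff matrix_matrix_mult_nth sum_negf)

lemma matrix_inv_invertible:
  fixes M :: "'a::field^'n^'n"
  assumes "invertible M"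
  shows "M ** matrix_inv M = mat 1" "matrix_inv M ** M = mat 1"
proof -
  have "\<exists>M'. M ** M' = mat 1 \<and> M' ** M = mat 1" using assms by (simp add: invertible_def)
  then have "M ** matrix_inv M = mat 1 \<and> matrix_inv M ** M = mat 1"
    unfolding matrix_inv_def by (rule someI_ex)
  then show "M ** matrix_inv M = mat 1" "matrix_inv M ** M = mat 1" by auto
qed

lemma matrix_inv_eqI:
  fixes M :: "'a::field^'n^'n"
  assumes "B ** M = mat 1"
  shows "matrix_inv M = B"
proof -
  have "invertible M" using assms invertible_left_inverse by blast
  then have "matrix_inv M = (B ** M) ** matrix_inv M" using assms by simp
  also have "\<dots> = B" by (simp add: matrix_inv_invertible(1)[OF \<open>invertible M\<close>] flip: matrix_mul_assoc)
  finally show ?thesis .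
qed

lemma hurwitz_real_eigenvector:
  fixes M :: "real^'n^'n"
  assumes "hurwitz M" "0 \<le> t" "M *v v = t *s v"
  shows "v = 0"
proof (rule ccontr)
  assume "v \<noteq> 0"
  define vc where "vc = (\<chi> i. complex_of_real (v $ i))"
  have "vc \<noteq> 0" using \<open>v \<noteq> 0\<close> by (auto simp: vc_def vec_eq_iff)
  moreover have "(\<chi> i k. complex_of_real (M $ i $ k)) *v vc = complex_of_real t *s vc"
    using assms(3) by (simp add: vec_eq_iff matrix_vector_mult_def vc_def flip: of_real_mult of_real_sum)
  ultimately have "eigenvalue M (complex_of_real t)" unfolding eigenvalue_def by blast
  then show False using assms(1,2) unfolding hurwitz_def by fastforce
qed

lemma hurwitz_invertible_shift:
  fixes A :: "real^'n^'n"
  assumes "hurwitz A" "0 \<le> t"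
  shows "invertible (mat t - A)"
proof -
  have "x = 0" if "(mat t - A) *v x = 0" for x
  proof -
    have "A *v x = t *s x"
      using that by (simp add: matrix_vector_mult_diff_rdistrib mat_mult_vec)
    then show "x = 0" using hurwitz_real_eigenvector assms by blast
  qed
  then show ?thesis using invertible_left_inverse matrix_left_invertible_ker by blast
qed

lemma resolvent_identity:
  fixes A :: "real^'n^'n"
  assumes "hurwitz A" "0 \<le> t" "0 \<le> u"
  shows "resolvent A u = resolvent A t + (t - u) *\<^sub>R (resolvent A t ** resolvent A u)"
proof -
  let ?Rt = "resolvent A t" and ?Ru = "resolvent A u"
  note inv_t = matrix_inv_invertible[OF hurwitz_invertible_shift[OF assms(1,2)], folded resolvent_def]
  note inv_u = matrix_inv_invertible[OF hurwitz_invertible_shift[OF assms(1,3)], folded resolvent_def]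
  have shift: "mat t - A = (mat u - A) + mat (t - u)"
    by (simp add: vec_eq_iff mat_def)
  have "(mat t - A) ** ?Ru = mat 1 + (t - u) *\<^sub>R ?Ru"
    unfolding shift matrix_add_rdistrib using inv_u by (simp add: mat_mult_left)
  then have "?Rt ** ((mat t - A) ** ?Ru) = ?Rt + (t - u) *\<^sub>R (?Rt ** ?Ru)"
    by (simp add: matrix_add_ldistrib matrix_scalar_ac scalar_matrix_assoc)
  then show ?thesis by (simp add: matrix_mul_assoc inv_t)
qed

lemma nonneg_mat_fixpoint:
  fixes X Q :: "real^'m^'n" and M :: "real^'n^'n"
  assumes X: "X = Q + M ** X" and "nonneg_mat Q" "nonneg_mat M"
    and M_le: "\<And>i k. M $ i $ k \<le> c" and small: "real CARD('n) * c < 1"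
  shows "nonneg_mat X"
proof -
  \<comment> \<open>A negative minimal entry m of X would satisfy m \<ge> n c m.\<close>
  obtain i0 k0 where min: "\<And>i k. X $ i0 $ k0 \<le> X $ i $ k"
    using ex_minimizer_finite[of "\<lambda>(i, k). X $ i $ k"] by auto
  let ?m = "X $ i0 $ k0" and ?r = "\<Sum>l\<in>UNIV. M $ i0 $ l"
  have "?m = Q $ i0 $ k0 + (\<Sum>l\<in>UNIV. M $ i0 $ l * X $ l $ k0)"
    by (subst X) (simp add: matrix_matrix_mult_nth)
  moreover have "?r * ?m \<le> (\<Sum>l\<in>UNIV. M $ i0 $ l * X $ l $ k0)"
    unfolding sum_distrib_right
    using \<open>nonneg_mat M\<close> by (intro sum_mono mult_left_mono min) (auto simp: nonneg_mat_def)
  moreover have "0 \<le> Q $ i0 $ k0" using \<open>nonneg_mat Q\<close> by (simp add: nonneg_mat_def)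
  ultimately have m_ge: "?r * ?m \<le> ?m" by linarith
  have r_le: "?r \<le> real CARD('n) * c"
    using sum_bounded_above[of UNIV "\<lambda>l. M $ i0 $ l" c] M_le by simp
  have "0 \<le> ?m"
  proof (rule ccontr)
    assume "\<not> 0 \<le> ?m"
    then have "real CARD('n) * c * ?m \<le> ?m"
      using r_le m_ge mult_right_mono_neg[of ?r "real CARD('n) * c" ?m] by linarith
    then have "0 \<le> (1 - real CARD('n) * c) * ?m" by (simp add: algebra_simps)
    then show False using small \<open>\<not> 0 \<le> ?m\<close> by (simp add: zero_le_mult_iff)
  qed
  then show ?thesis using min order_trans unfolding nonneg_mat_def by blast
qed

lemma resolvent_nonneg_large:
  fixes A :: "real^'n^'n"
  assumes "metzler A" "hurwitz A"
  shows "\<exists>t\<ge>0. nonneg_mat (resolvent A t)"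
proof -
  \<comment> \<open>With P = A + a I \<ge> 0 and s = t + a, X = (t I - A)^-1 solves X = I/s + (P/s) X,
    and the entries of P/s are small once t is large.\<close>
  obtain i0 k0 where max: "\<And>i k. \<bar>A $ i $ k\<bar> \<le> \<bar>A $ i0 $ k0\<bar>"
    using ex_minimizer_finite[of "\<lambda>(i, k). - \<bar>A $ i $ k\<bar>"] by auto
  define a where "a = \<bar>A $ i0 $ k0\<bar>"
  define n where "n = real CARD('n)"
  define t where "t = 2 * n * a + 1"
  define s where "s = t + a"
  define P where "P = A + mat a"
  have "0 \<le> a" "0 < n" by (simp_all add: a_def n_def)
  then have "0 \<le> t" "2 * n * a < s" by (simp_all add: t_def s_def)
  moreover have "0 \<le> 2 * n * a" using \<open>0 \<le> a\<close> \<open>0 < n\<close> by simp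
  ultimately have "0 < s" by linarith
  have "0 \<le> A $ i $ i + a" for i using max[of i i] by (simp add: a_def abs_le_iff)
  then have "nonneg_mat P"
    using assms(1) unfolding nonneg_mat_def metzler_def P_def by (auto simp: mat_def)
  have P_le: "P $ i $ k \<le> 2 * a" for i k
    using max[of i k] by (auto simp: P_def mat_def a_def abs_le_iff)
  define X where "X = resolvent A t"
  have "mat t - A = mat s - P" by (simp add: vec_eq_iff P_def s_def mat_def)
  then have "(mat s - P) ** X = mat 1"
    using matrix_inv_invertible(1)[OF hurwitz_invertible_shift[OF assms(2) \<open>0 \<le> t\<close>]]
    by (simp add: X_def resolvent_def)
  then have "s *\<^sub>R X - P ** X = mat 1"
    by (simp add: matrix_diff_rdistrib mat_mult_left)
  then have "s *\<^sub>R X = mat 1 + P ** X"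
    by (metis diff_add_cancel add.commute)
  then have "(1 / s) *\<^sub>R (s *\<^sub>R X) = (1 / s) *\<^sub>R mat 1 + ((1 / s) *\<^sub>R P) ** X"
    by (simp add: scaleR_right_distrib scalar_matrix_assoc)
  then have "X = (1 / s) *\<^sub>R mat 1 + ((1 / s) *\<^sub>R P) ** X"
    using \<open>0 < s\<close> by simp
  moreover have "nonneg_mat ((1 / s) *\<^sub>R mat 1 :: real^'n^'n)" "nonneg_mat ((1 / s) *\<^sub>R P)"
    using \<open>nonneg_mat P\<close> \<open>0 < s\<close> by (simp_all add: nonneg_mat_def mat_def)
  moreover have "((1 / s) *\<^sub>R P) $ i $ k \<le> 2 * a / s" for i k
    using P_le \<open>0 < s\<close> by (simp add: divide_right_mono)
  moreover have "real CARD('n) * (2 * a / s) < 1"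
    using \<open>2 * n * a < s\<close> \<open>0 < s\<close> by (simp add: n_def field_simps)
  ultimately have "nonneg_mat X"
    by (rule nonneg_mat_fixpoint)
  then show ?thesis using \<open>0 \<le> t\<close> X_def by blast
qed

lemma resolvent_bound_near:
  fixes A :: "real^'n^'n"
  assumes "hurwitz A" "0 \<le> t" "0 \<le> u"
    and bound: "\<And>i k. \<bar>resolvent A t $ i $ k\<bar> \<le> c"
    and close: "real CARD('n) * \<bar>t - u\<bar> * c \<le> 1 / 2"
  shows "\<bar>resolvent A u $ i $ k\<bar> \<le> 2 * c"
proof -
  let ?Rt = "resolvent A t" and ?Ru = "resolvent A u"
  obtain i0 k0 where max: "\<And>i k. \<bar>?Ru $ i $ k\<bar> \<le> \<bar>?Ru $ i0 $ k0\<bar>"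
    using ex_minimizer_finite[of "\<lambda>(i, k). - \<bar>?Ru $ i $ k\<bar>"] by auto
  let ?m = "\<bar>?Ru $ i0 $ k0\<bar>"
  have "0 \<le> c" using bound[of i k] by linarith
  have "?Ru $ i0 $ k0 = ?Rt $ i0 $ k0 + (t - u) * (\<Sum>l\<in>UNIV. ?Rt $ i0 $ l * ?Ru $ l $ k0)"
    by (subst resolvent_identity[OF assms(1-3)]) (simp add: matrix_matrix_mult_nth)
  then have "?m = \<bar>?Rt $ i0 $ k0 + (t - u) * (\<Sum>l\<in>UNIV. ?Rt $ i0 $ l * ?Ru $ l $ k0)\<bar>"
    by simp
  also have "\<dots> \<le> \<bar>?Rt $ i0 $ k0\<bar> + \<bar>t - u\<bar> * \<bar>\<Sum>l\<in>UNIV. ?Rt $ i0 $ l * ?Ru $ l $ k0\<bar>"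
    unfolding abs_mult[symmetric] by (rule abs_triangle_ineq)
  also have "\<dots> \<le> c + \<bar>t - u\<bar> * (real CARD('n) * (c * ?m))"
  proof (intro add_mono mult_left_mono)
    have "\<bar>?Rt $ i0 $ l * ?Ru $ l $ k0\<bar> \<le> c * ?m" for l
      unfolding abs_mult using bound max \<open>0 \<le> c\<close> by (intro mult_mono) auto
    then have "(\<Sum>l\<in>UNIV. \<bar>?Rt $ i0 $ l * ?Ru $ l $ k0\<bar>) \<le> real CARD('n) * (c * ?m)"
      using sum_bounded_above[of UNIV "\<lambda>l. \<bar>?Rt $ i0 $ l * ?Ru $ l $ k0\<bar>" "c * ?m"] by simp
    then show "\<bar>\<Sum>l\<in>UNIV. ?Rt $ i0 $ l * ?Ru $ l $ k0\<bar> \<le> real CARD('n) * (c * ?m)"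
      by (rule order_trans[OF sum_abs])
  qed (use bound in auto)
  also have "\<dots> \<le> c + ?m / 2"
    using mult_right_mono[OF close, of ?m] by (simp add: mult_ac)
  finally show ?thesis using max[of i k] by linarith
qed

lemma resolvent_nonneg_below:
  fixes A :: "real^'n^'n"
  assumes "hurwitz A" "0 \<le> u" "u \<le> t"
    and "nonneg_mat (resolvent A t)" and bound: "\<And>i k. resolvent A t $ i $ k \<le> c"
    and close: "real CARD('n) * (t - u) * c < 1"
  shows "nonneg_mat (resolvent A u)"
proof (rule nonneg_mat_fixpoint)
  show "resolvent A u = resolvent A t + ((t - u) *\<^sub>R resolvent A t) ** resolvent A u"
    using resolvent_identity[OF assms(1) _ assms(2)] assms(2,3) by (simp add: scalar_matrix_assoc)
  show "nonneg_mat ((t - u) *\<^sub>R resolvent A t)"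
    using assms(3,4) by (simp add: nonneg_mat_def)
  show "((t - u) *\<^sub>R resolvent A t) $ i $ k \<le> (t - u) * c" for i k
    using assms(3) bound by (simp add: mult_left_mono)
  show "real CARD('n) * ((t - u) * c) < 1" using close by (simp add: mult_ac)
qed fact

lemma real_downward_continuation:
  fixes P :: "real \<Rightarrow> bool"
  assumes "P t0" "0 \<le> t0"
    and step: "\<And>T. 0 \<le> T \<Longrightarrow> \<exists>h>0. \<forall>u v. T \<le> u \<longrightarrow> u < T + h \<longrightarrow> P u
                                    \<longrightarrow> 0 \<le> v \<longrightarrow> u - h \<le> v \<longrightarrow> v \<le> u \<longrightarrow> P v"
  shows "P 0"
proof -
  define S where "S = {t. 0 \<le> t \<and> t \<le> t0 \<and> (\<forall>u. t \<le> u \<and> u \<le> t0 \<longrightarrow> P u)}"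
  have "t0 \<in> S" using assms(1,2) by (auto simp: S_def)
  have "bdd_below S" unfolding S_def by (rule bdd_belowI[of _ 0]) auto
  define T where "T = Inf S"
  have "0 \<le> T" unfolding T_def using \<open>t0 \<in> S\<close> by (intro cInf_greatest) (auto simp: S_def)
  obtain h where "h > 0"
    and h: "\<And>u v. T \<le> u \<Longrightarrow> u < T + h \<Longrightarrow> P u \<Longrightarrow> 0 \<le> v \<Longrightarrow> u - h \<le> v \<Longrightarrow> v \<le> u \<Longrightarrow> P v"
    using step[OF \<open>0 \<le> T\<close>] by blast
  obtain u where "u \<in> S" "u < T + h"
    using cInf_less_iff[of S "T + h"] \<open>t0 \<in> S\<close> \<open>bdd_below S\<close> \<open>h > 0\<close> by (auto simp: T_def)
  have "T \<le> u" unfolding T_def by (rule cInf_lower[OF \<open>u \<in> S\<close> \<open>bdd_below S\<close>])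
  define t1 where "t1 = max 0 (u - h)"
  have "P u" "u \<le> t0" using \<open>u \<in> S\<close> by (auto simp: S_def)
  have "t1 \<in> S"
    using \<open>u \<in> S\<close> h[OF \<open>T \<le> u\<close> \<open>u < T + h\<close> \<open>P u\<close>] \<open>h > 0\<close>
    by (fastforce simp: S_def t1_def)
  then have "T \<le> t1" unfolding T_def by (rule cInf_lower[OF _ \<open>bdd_below S\<close>])
  then have "t1 = 0" using \<open>u < T + h\<close> by (simp add: t1_def)
  then show ?thesis using \<open>t1 \<in> S\<close> by (auto simp: S_def)
qed

lemma metzler_hurwitz_resolvent_nonneg:
  fixes A :: "real^'n^'n"
  assumes "metzler A" "hurwitz A"
  shows "nonneg_mat (resolvent A 0)"
proof -
  obtain t0 where "nonneg_mat (resolvent A t0)" "0 \<le> t0"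
    using resolvent_nonneg_large[OF assms] by blast
  then show ?thesis
  proof (rule real_downward_continuation[where P = "\<lambda>t. nonneg_mat (resolvent A t)"])
    \<comment> \<open>A bound c on the resolvent at T bounds it by 2 c on [T, T + h), and from there
      nonnegativity passes a further distance h downwards.\<close>
    fix T :: real assume "0 \<le> T"
    obtain i0 k0 where max: "\<And>i k. \<bar>resolvent A T $ i $ k\<bar> \<le> \<bar>resolvent A T $ i0 $ k0\<bar>"
      using ex_minimizer_finite[of "\<lambda>(i, k). - \<bar>resolvent A T $ i $ k\<bar>"] by auto
    define c where "c = \<bar>resolvent A T $ i0 $ k0\<bar> + 1"
    define n where "n = real CARD('n)"
    define h where "h = 1 / (4 * n * c)"
    have "0 < c" "0 < n" by (simp_all add: c_def n_def add_nonneg_pos)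
    then have "0 < h" and nhc: "n * h * c = 1 / 4" by (simp_all add: h_def field_simps)
    have bound: "\<bar>resolvent A T $ i $ k\<bar> \<le> c" for i k using max[of i k] by (simp add: c_def)
    have "nonneg_mat (resolvent A v)"
      if "T \<le> u" "u < T + h" "nonneg_mat (resolvent A u)" "0 \<le> v" "u - h \<le> v" "v \<le> u" for u v
    proof (rule resolvent_nonneg_below[OF assms(2) \<open>0 \<le> v\<close> \<open>v \<le> u\<close> \<open>nonneg_mat (resolvent A u)\<close>])
      have "n * \<bar>T - u\<bar> * c \<le> n * h * c"
        using that \<open>0 < n\<close> \<open>0 < c\<close> by (intro mult_right_mono mult_left_mono) auto
      then have "real CARD('n) * \<bar>T - u\<bar> * c \<le> 1 / 2" using nhc unfolding n_def by linarith
      moreover have "0 \<le> u" using that \<open>0 \<le> T\<close> by linarith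
      ultimately have "\<bar>resolvent A u $ i $ k\<bar> \<le> 2 * c" for i k
        using resolvent_bound_near[OF assms(2) \<open>0 \<le> T\<close> _ bound] by blast
      then show "\<And>i k. resolvent A u $ i $ k \<le> 2 * c" by (simp add: abs_le_iff)
      have "n * (u - v) * (2 * c) \<le> n * h * (2 * c)"
        using that \<open>0 < n\<close> \<open>0 < c\<close> by (intro mult_right_mono mult_left_mono) auto
      then show "real CARD('n) * (u - v) * (2 * c) < 1" using nhc unfolding n_def by linarith
    qed
    then show "\<exists>h>0. \<forall>u v. T \<le> u \<longrightarrow> u < T + h \<longrightarrow> nonneg_mat (resolvent A u)
               \<longrightarrow> 0 \<le> v \<longrightarrow> u - h \<le> v \<longrightarrow> v \<le> u \<longrightarrow> nonneg_mat (resolvent A v)"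
      using \<open>0 < h\<close> by blast
  qed
qed

lemma metzler_hurwitz_inverse:
  fixes A :: "real^'n^'n"
  assumes "metzler A" "hurwitz A"
  shows "invertible A" "nonneg_mat (- matrix_inv A)" "matrix_inv A $ i $ i < 0"
proof -
  let ?R = "resolvent A 0"
  have R: "?R ** (- A) = mat 1" "(- A) ** ?R = mat 1"
    using matrix_inv_invertible[OF hurwitz_invertible_shift[OF assms(2), of 0]]
    by (simp_all add: resolvent_def)
  then have "(- ?R) ** A = mat 1" by (simp add: matrix_mult_minus_left matrix_mult_minus_right)
  then show "invertible A" using invertible_left_inverse by blast
  have inv: "matrix_inv A = - ?R" by (rule matrix_inv_eqI) fact
  have R_nonneg: "0 \<le> ?R $ i $ k" for i k
    using metzler_hurwitz_resolvent_nonneg[OF assms] by (simp add: nonneg_mat_def)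
  then show "nonneg_mat (- matrix_inv A)" by (simp add: inv nonneg_mat_def)
  have "1 = ((- A) ** ?R) $ i $ i" using R(2) by (simp add: mat_def)
  also have "\<dots> = - A $ i $ i * ?R $ i $ i + (\<Sum>l\<in>UNIV - {i}. - A $ i $ l * ?R $ l $ i)"
    by (simp add: matrix_matrix_mult_nth sum.remove[of UNIV i])
  also have "\<dots> \<le> - A $ i $ i * ?R $ i $ i"
    using assms(1) R_nonneg by (auto simp: metzler_def intro!: sum_nonpos mult_nonneg_nonneg)
  finally have "?R $ i $ i \<noteq> 0" by auto
  then show "matrix_inv A $ i $ i < 0" using R_nonneg[of i i] by (simp add: inv)
qed

lemma metzler_hurwitz_positive_vectors:
  fixes A :: "real^'n^'n"
  assumes "metzler A" "hurwitz A"
  obtains p q :: "real^'n"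
  where "\<And>i. 0 < p $ i" "\<And>i. 0 < q $ i" "A *v p = - 1" "q v* A = - 1"
proof
  let ?N = "- matrix_inv A"
  note inv = matrix_inv_invertible[OF metzler_hurwitz_inverse(1)[OF assms]]
  have N_nonneg: "0 \<le> ?N $ i $ k" for i k
    using metzler_hurwitz_inverse(2)[OF assms] by (simp add: nonneg_mat_def)
  have N_diag: "0 < ?N $ i $ i" for i using metzler_hurwitz_inverse(3)[OF assms] by simp
  show "0 < (matrix_inv A *v - 1) $ i" for i
  proof -
    have "?N $ i $ i \<le> (\<Sum>l\<in>UNIV. ?N $ i $ l)" using N_nonneg by (intro member_le_sum) auto
    then show ?thesis using N_diag[of i] by (simp add: matrix_vector_mult_def sum_negf)
  qed
  show "0 < (- 1 v* matrix_inv A) $ i" for i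
  proof -
    have "?N $ i $ i \<le> (\<Sum>l\<in>UNIV. ?N $ l $ i)" using N_nonneg by (intro member_le_sum) auto
    then show ?thesis using N_diag[of i] by (simp add: vector_matrix_mult_def sum_negf)
  qed
  show "A *v (matrix_inv A *v - 1) = - 1"
    using inv(1) by (simp add: matrix_vector_mul_assoc)
  show "(- 1 v* matrix_inv A) v* A = - 1"
    using inv(2) by (simp add: vector_matrix_mul_assoc)
qed

section \<open>A diagonal Lyapunov form for Metzler Hurwitz matrices\<close>

lemma Re_cnj_mult: "Re (cnj a * b) = (cmod a ^ 2 + cmod b ^ 2 - cmod (a - b) ^ 2) / 2"
  unfolding cmod_power2 by (simp add: power2_eq_square algebra_simps)

lemma metzler_weighted_form_bound:
  fixes A :: "real^'n^'n" and p q :: "real^'n" and u :: "'n \<Rightarrow> complex"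
  assumes "metzler A" and p: "\<And>i. 0 < p $ i" and q: "\<And>i. 0 < q $ i"
    and Ap: "A *v p = - 1" and qA: "q v* A = - 1"
  shows "(\<Sum>i\<in>UNIV. \<Sum>l\<in>UNIV. q $ i / p $ i * A $ i $ l * Re (cnj (u i) * u l))
         \<le> - (\<Sum>i\<in>UNIV. (p $ i + q $ i) * (cmod (u i) / p $ i) ^ 2) / 2"
proof -
  define y where "y i = u i / complex_of_real (p $ i)" for i
  define c where "c i l = q $ i * A $ i $ l * p $ l" for i l
  have u: "u i = complex_of_real (p $ i) * y i" for i
    using p[of i] by (simp add: y_def)
  have cmod_y: "cmod (y i) = cmod (u i) / p $ i" for i
    using p[of i] by (simp add: y_def norm_divide)
  have row: "(\<Sum>l\<in>UNIV. A $ i $ l * p $ l) = - 1" for i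
    using arg_cong[where f = "\<lambda>v. v $ i", OF Ap] by (simp add: matrix_vector_mult_def)
  have col: "(\<Sum>i\<in>UNIV. q $ i * A $ i $ l) = - 1" for l
    using arg_cong[where f = "\<lambda>v. v $ l", OF qA] by (simp add: vector_matrix_mult_def)
  have Re_uy: "Re (cnj (u i) * u l) = p $ i * p $ l * Re (cnj (y i) * y l)" for i l
    by (simp add: u algebra_simps)
  have Re_u: "Re (cnj (u i) * u l)
      = p $ i * p $ l * ((cmod (y i) ^ 2 + cmod (y l) ^ 2 - cmod (y i - y l) ^ 2) / 2)" for i l
    by (simp only: Re_uy Re_cnj_mult[of "y i" "y l"])
  have summand: "q $ i / p $ i * A $ i $ l * Re (cnj (u i) * u l)
      = (c i l * cmod (y i) ^ 2 + c i l * cmod (y l) ^ 2 - c i l * cmod (y i - y l) ^ 2) / 2" for i l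
    using p[of i] by (simp only: Re_u) (simp add: c_def field_simps)
  have "(\<Sum>i\<in>UNIV. \<Sum>l\<in>UNIV. c i l * cmod (y i) ^ 2)
      = (\<Sum>i\<in>UNIV. q $ i * cmod (y i) ^ 2 * (\<Sum>l\<in>UNIV. A $ i $ l * p $ l))"
    by (simp add: c_def sum_distrib_left mult_ac)
  then have rows: "(\<Sum>i\<in>UNIV. \<Sum>l\<in>UNIV. c i l * cmod (y i) ^ 2) = - (\<Sum>i\<in>UNIV. q $ i * cmod (y i) ^ 2)"
    by (simp add: row sum_negf)
  have "(\<Sum>i\<in>UNIV. \<Sum>l\<in>UNIV. c i l * cmod (y l) ^ 2)
      = (\<Sum>l\<in>UNIV. p $ l * cmod (y l) ^ 2 * (\<Sum>i\<in>UNIV. q $ i * A $ i $ l))"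
    by (subst sum.swap) (simp add: c_def sum_distrib_left mult_ac)
  then have cols: "(\<Sum>i\<in>UNIV. \<Sum>l\<in>UNIV. c i l * cmod (y l) ^ 2) = - (\<Sum>l\<in>UNIV. p $ l * cmod (y l) ^ 2)"
    by (simp add: col sum_negf)
  have "0 \<le> c i l * cmod (y i - y l) ^ 2" for i l
    using \<open>metzler A\<close> p[of l] q[of i]
    by (cases "i = l") (auto simp: c_def metzler_def intro!: mult_nonneg_nonneg)
  then have diffs: "0 \<le> (\<Sum>i\<in>UNIV. \<Sum>l\<in>UNIV. c i l * cmod (y i - y l) ^ 2)"
    by (intro sum_nonneg)
  have "(\<Sum>i\<in>UNIV. \<Sum>l\<in>UNIV. q $ i / p $ i * A $ i $ l * Re (cnj (u i) * u l))
      = ((\<Sum>i\<in>UNIV. \<Sum>l\<in>UNIV. c i l * cmod (y i) ^ 2) + (\<Sum>i\<in>UNIV. \<Sum>l\<in>UNIV. c i l * cmod (y l) ^ 2)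
         - (\<Sum>i\<in>UNIV. \<Sum>l\<in>UNIV. c i l * cmod (y i - y l) ^ 2)) / 2"
    by (simp only: summand) (simp add: sum.distrib sum_subtractf flip: sum_divide_distrib)
  also have "\<dots> \<le> (- (\<Sum>i\<in>UNIV. q $ i * cmod (y i) ^ 2) - (\<Sum>i\<in>UNIV. p $ i * cmod (y i) ^ 2)) / 2"
    using rows cols diffs by simp
  also have "\<dots> = - (\<Sum>i\<in>UNIV. (p $ i + q $ i) * (cmod (u i) / p $ i) ^ 2) / 2"
    by (simp add: cmod_y distrib_right sum.distrib)
  finally show ?thesis .
qed

section \<open>The Jacobian of the closed loop\<close>

definition closed_loop_jacobian ::
  "real^'n^'n \<Rightarrow> 'n \<Rightarrow> real \<Rightarrow> real \<Rightarrow> real \<Rightarrow> real^('n option) \<Rightarrow> real^('n option)^('n option)" where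
  "closed_loop_jacobian A j kp alpha mu w = (\<chi> r c. case r of
      Some i \<Rightarrow> (case c of
          Some l \<Rightarrow> A $ i $ l - (if i = j \<and> l = j then kp * w $ None else 0)
        | None \<Rightarrow> - (if i = j then kp * w $ Some j else 0))
    | None \<Rightarrow> (case c of
          Some l \<Rightarrow> (if l = j then alpha * w $ None else 0)
        | None \<Rightarrow> - alpha * (mu - w $ Some j)))"

lemma sum_UNIV_option:
  fixes f :: "'n::finite option \<Rightarrow> 'a::comm_monoid_add"
  shows "(\<Sum>r\<in>UNIV. f r) = f None + (\<Sum>l\<in>UNIV. f (Some l))"
  by (simp add: UNIV_option_conv sum.reindex)

lemma closed_loop_jacobian_mult_vec:
  fixes v :: "'a::real_algebra_1^('n::finite option)"
  shows "((\<chi> r c. of_real (closed_loop_jacobian A j kp alpha mu w $ r $ c)) *v v) $ Some i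
      = (\<Sum>l\<in>UNIV. of_real (A $ i $ l) * v $ Some l)
        - (if i = j then of_real (kp * w $ None) * v $ Some j + of_real (kp * w $ Some j) * v $ None
           else 0)" (is ?row_Some)
    and "((\<chi> r c. of_real (closed_loop_jacobian A j kp alpha mu w $ r $ c)) *v v) $ None
      = of_real (alpha * w $ None) * v $ Some j - of_real (alpha * (mu - w $ Some j)) * v $ None"
      (is ?row_None)
proof -
  have "(\<Sum>l\<in>UNIV. of_real (if i = j \<and> l = j then c else 0) * v $ Some l)
      = (if i = j then of_real c * v $ Some j else 0)" for c
    by (auto simp: if_distrib if_distribR sum.delta cong: if_cong)
  then show ?row_Some by (simp add: closed_loop_jacobian_def matrix_vector_mult_def sum_UNIV_option
        of_real_diff left_diff_distrib sum_subtractf del: of_real_mult)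
  have "(\<Sum>l\<in>UNIV. of_real (if l = j then c else 0) * v $ Some l) = of_real c * v $ Some j" for c
    by (auto simp: if_distrib if_distribR sum.delta' cong: if_cong)
  then show ?row_None by (simp add: closed_loop_jacobian_def matrix_vector_mult_def sum_UNIV_option del: of_real_mult)
qed

lemma has_derivative_vec_nth: "((\<lambda>x. x $ k) has_derivative (\<lambda>h. h $ k)) F"
  by (rule bounded_linear_imp_has_derivative) (rule bounded_linear_vec_nth)

lemma has_derivative_vec_componentwise:
  fixes f :: "'a::real_normed_vector \<Rightarrow> real^'n"
  assumes "\<And>k. ((\<lambda>x. f x $ k) has_derivative (\<lambda>h. f' h $ k)) (at a within S)"
  shows "(f has_derivative f') (at a within S)"
proof (rule has_derivative_componentwise_within[THEN iffD2], intro ballI)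
  fix e :: "real^'n" assume "e \<in> Basis"
  then obtain k where e: "e = axis k 1" by (auto simp: Basis_vec_def)
  show "((\<lambda>x. f x \<bullet> e) has_derivative (\<lambda>h. f' h \<bullet> e)) (at a within S)"
    unfolding e cart_eq_inner_axis[symmetric] by (rule assms)
qed

lemma closed_loop_has_derivative:
  "(closed_loop A b0 j kp alpha mu has_derivative (\<lambda>h. closed_loop_jacobian A j kp alpha mu w *v h)) (at w)"
proof (rule has_derivative_vec_componentwise)
  note J = closed_loop_jacobian_mult_vec[where 'a = real, simplified]
  fix k
  show "((\<lambda>x. closed_loop A b0 j kp alpha mu x $ k) has_derivative
         (\<lambda>h. (closed_loop_jacobian A j kp alpha mu w *v h) $ k)) (at w)"
  proof (cases k)
    case None
    have "((\<lambda>x. - alpha * x $ None * (mu - x $ Some j)) has_derivative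
        (\<lambda>h. - alpha * h $ None * (mu - w $ Some j) + (- alpha * w $ None) * (- h $ Some j))) (at w)"
      by (auto intro!: derivative_eq_intros has_derivative_vec_nth)
    then show ?thesis
      unfolding None J by (simp add: closed_loop_def Let_def mult_ac)
  next
    case (Some i)
    have "((\<lambda>x. (\<Sum>l\<in>UNIV. A $ i $ l * x $ Some l) - kp * x $ Some j * x $ None * axis j 1 $ i + b0 $ i)
        has_derivative (\<lambda>h. (\<Sum>l\<in>UNIV. A $ i $ l * h $ Some l)
          - kp * (h $ Some j * w $ None + w $ Some j * h $ None) * axis j 1 $ i)) (at w)"
      by (auto intro!: derivative_eq_intros has_derivative_vec_nth simp: algebra_simps)
    then show ?thesis
      unfolding Some J
      by (cases "i = j") (simp_all add: closed_loop_def Let_def matrix_vector_mult_def axis_def algebra_simps)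
  qed
qed

lemma Re_cnj_mult_self: "Re (cnj x * (c * x)) = Re c * cmod x ^ 2"
  unfolding cmod_power2 by (simp add: power2_eq_square algebra_simps)

lemma Re_cnj_mult_nonneg_eigen:
  assumes "0 < a" "0 \<le> Re lam" "of_real a * x = lam * z"
  shows "0 \<le> Re (cnj x * z)"
proof -
  have "of_real a * (cnj x * z) = cnj z * (cnj lam * z)"
    using arg_cong[where f = "\<lambda>y. cnj y * z", OF assms(3)] by (simp add: mult_ac)
  then have "Re (of_real a * (cnj x * z)) = Re (cnj z * (cnj lam * z))" by (rule arg_cong)
  then have "a * Re (cnj x * z) = Re lam * cmod z ^ 2"
    by (simp only: scaleR_conv_of_real[symmetric] scaleR_complex.sel Re_cnj_mult_self cnj.sel)
  then have "0 \<le> a * Re (cnj x * z)" using assms(2) by simp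
  then show ?thesis using assms(1) by (simp only: zero_le_mult_iff) linarith
qed

lemma feedback_eigenvector_trivial:
  fixes A :: "real^'n^'n" and u :: "'n \<Rightarrow> complex"
  assumes "metzler A" "hurwitz A" "0 \<le> kz" "0 < km" "0 < az" "0 \<le> Re lam"
    and E1: "\<And>i. (\<Sum>l\<in>UNIV. of_real (A $ i $ l) * u l)
                 = lam * u i + (if i = j then of_real kz * u j + of_real km * z else 0)"
    and E2: "of_real az * u j = lam * z"
  shows "u = (\<lambda>_. 0)" "z = 0"
proof -
  obtain p q :: "real^'n" where p: "\<And>i. 0 < p $ i" and q: "\<And>i. 0 < q $ i"
    and "A *v p = - 1" "q v* A = - 1"
    using metzler_hurwitz_positive_vectors[OF assms(1,2)] by blast
  define d where "d i = q $ i / p $ i" for i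
  have "0 < d i" for i using p q by (simp add: d_def)
  have coupling: "0 \<le> Re (cnj (u j) * z)"
    using Re_cnj_mult_nonneg_eigen[OF \<open>0 < az\<close> \<open>0 \<le> Re lam\<close> E2] .
  \<comment> \<open>Pair the first equation with D u, D = diag d.\<close>
  have "(\<Sum>i\<in>UNIV. \<Sum>l\<in>UNIV. d i * A $ i $ l * Re (cnj (u i) * u l))
      = (\<Sum>i\<in>UNIV. d i * Re (cnj (u i) * (\<Sum>l\<in>UNIV. of_real (A $ i $ l) * u l)))"
    by (simp add: sum_distrib_left Re_sum algebra_simps)
  also have "\<dots> = (\<Sum>i\<in>UNIV. Re lam * (d i * cmod (u i) ^ 2)
                      + (if i = j then d j * (kz * cmod (u j) ^ 2 + km * Re (cnj (u j) * z)) else 0))"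
    unfolding E1 cmod_power2 by (intro sum.cong refl) (simp add: power2_eq_square algebra_simps)
  also have "\<dots> = Re lam * (\<Sum>i\<in>UNIV. d i * cmod (u i) ^ 2)
                   + d j * (kz * cmod (u j) ^ 2 + km * Re (cnj (u j) * z))"
    by (simp add: sum.distrib sum_distrib_left)
  also have "\<dots> \<ge> 0"
    using \<open>\<And>i. 0 < d i\<close> assms(3,4,6) coupling
    by (intro add_nonneg_nonneg mult_nonneg_nonneg sum_nonneg) (auto simp: less_imp_le)
  finally have "0 \<le> (\<Sum>i\<in>UNIV. \<Sum>l\<in>UNIV. d i * A $ i $ l * Re (cnj (u i) * u l))" .
  then have "(\<Sum>i\<in>UNIV. (p $ i + q $ i) * (cmod (u i) / p $ i) ^ 2) \<le> 0"
    using metzler_weighted_form_bound[OF assms(1) p q \<open>A *v p = - 1\<close> \<open>q v* A = - 1\<close>, of u]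
    by (simp add: d_def)
  moreover have "0 \<le> (p $ i + q $ i) * (cmod (u i) / p $ i) ^ 2" for i
    using p[of i] q[of i] by simp
  ultimately have "(p $ i + q $ i) * (cmod (u i) / p $ i) ^ 2 = 0" for i
    using sum_nonneg_eq_0_iff[of UNIV "\<lambda>i. (p $ i + q $ i) * (cmod (u i) / p $ i) ^ 2"]
    by (simp add: order_antisym sum_nonneg)
  then have "u i = 0" for i
    using p[of i] q[of i] by (metis add_pos_pos divide_eq_0_iff mult_eq_0_iff norm_eq_zero
        order_less_irrefl power_eq_0_iff)
  then show u0: "u = (\<lambda>_. 0)" by blast
  show "z = 0" using E1[of j] \<open>0 < km\<close> by (simp add: u0)
qed

lemma closed_loop_jacobian_hurwitz:
  fixes A :: "real^'n^'n"
  assumes "metzler A" "hurwitz A" "0 < kp" "0 < alpha" "0 < mu"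
    and "0 < w $ None" "w $ Some j = mu"
  shows "hurwitz (closed_loop_jacobian A j kp alpha mu w)"
  unfolding hurwitz_def eigenvalue_def
proof (intro allI impI)
  fix lam
  assume "\<exists>v. v \<noteq> 0 \<and>
    (\<chi> r c. complex_of_real (closed_loop_jacobian A j kp alpha mu w $ r $ c)) *v v = lam *s v"
  then obtain v where "v \<noteq> 0"
    and ev: "(\<chi> r c. complex_of_real (closed_loop_jacobian A j kp alpha mu w $ r $ c)) *v v = lam *s v"
    by blast
  show "Re lam < 0"
  proof (rule ccontr)
    assume "\<not> Re lam < 0"
    have E1: "(\<Sum>l\<in>UNIV. of_real (A $ i $ l) * v $ Some l)
        = lam * v $ Some i
          + (if i = j then of_real (kp * w $ None) * v $ Some j + of_real (kp * mu) * v $ None else 0)"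
      for i
      using arg_cong[where f = "\<lambda>x. x $ Some i", OF ev] \<open>w $ Some j = mu\<close>
      unfolding closed_loop_jacobian_mult_vec by (simp add: algebra_simps)
    have E2: "of_real (alpha * w $ None) * v $ Some j = lam * v $ None"
      using arg_cong[where f = "\<lambda>x. x $ None", OF ev] \<open>w $ Some j = mu\<close>
      unfolding closed_loop_jacobian_mult_vec by simp
    have "0 \<le> kp * w $ None" "0 < kp * mu" "0 < alpha * w $ None" "0 \<le> Re lam"
      using assms(3-6) \<open>\<not> Re lam < 0\<close> by simp_all
    from feedback_eigenvector_trivial[OF assms(1,2) this E1 E2]
    have "(\<lambda>l. v $ Some l) = (\<lambda>_. 0)" "v $ None = 0" .
    then have "v $ k = 0" for k by (cases k) (simp_all add: fun_eq_iff)
    then have "v = 0" by (simp add: vec_eq_iff)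
    with \<open>v \<noteq> 0\<close> show False by contradiction
  qed
qed

theorem mainTheorem17:
  fixes A :: "real^'n^'n" and b0 :: "real^'n" and j :: 'n
    and mu alpha kp :: real
  assumes "metzler A" and "hurwitz A"
    and "\<forall>i. b0 $ i \<ge> 0"
    and "0 < mu" and "mu < - (matrix_inv A *v b0) $ j"
    and "alpha > 0" and "kp > 0"
  shows "let g0 = - (matrix_inv A *v b0) $ j;
             gn = - (matrix_inv A *v axis j 1) $ j;
             zs = (g0 - mu) / (gn * mu * kp);
             xs = - (matrix_inv A *v (b0 - (kp * mu * zs) *\<^sub>R axis j 1))
         in loc_exp_stable (closed_loop A b0 j kp alpha mu)
              (\<chi> k. case k of Some i \<Rightarrow> xs $ i | None \<Rightarrow> zs)"
proof -
  define g0 where "g0 = - (matrix_inv A *v b0) $ j"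
  define gn where "gn = - (matrix_inv A *v axis j 1) $ j"
  define zs where "zs = (g0 - mu) / (gn * mu * kp)"
  define xs where "xs = - (matrix_inv A *v (b0 - (kp * mu * zs) *\<^sub>R axis j 1))"
  have "gn = - matrix_inv A $ j $ j"
    by (simp add: gn_def matrix_vector_mult_basis column_def)
  then have "0 < gn" using metzler_hurwitz_inverse(3)[OF assms(1,2)] by simp
  then have "0 < zs" using assms(4,5,7) by (simp add: zs_def g0_def)
  have "xs $ j = g0 - kp * mu * zs * gn"
    by (simp add: xs_def g0_def gn_def matrix_vector_mult_diff_distrib matrix_vector_mult_scaleR)
  also have "\<dots> = mu" using \<open>0 < gn\<close> assms(4,7) by (simp add: zs_def)
  finally have "xs $ j = mu" .
  define w :: "real^'n option" where "w = (\<chi> k. case k of Some i \<Rightarrow> xs $ i | None \<Rightarrow> zs)"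
  have "0 < w $ None" "w $ Some j = mu" using \<open>0 < zs\<close> \<open>xs $ j = mu\<close> by (simp_all add: w_def)
  then have "loc_exp_stable (closed_loop A b0 j kp alpha mu) w"
    unfolding loc_exp_stable_def
    using closed_loop_has_derivative closed_loop_jacobian_hurwitz[OF assms(1,2,7,6,4)] by blast
  then show ?thesis unfolding Let_def w_def xs_def zs_def g0_def gn_def .
qed

end
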